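(* For every modal formula $A$ and label $x$: if ${\sf GL}\vdash A$ then the sequent $\emptyset\Rightarrow x:A$ has an $\infty$-proof in $\mathsf{labK4}$.
   Context: Modal formulas: $A ::= p \mid \bot \mid A\wedge A \mid A \vee A \mid A \to A \mid \Box A \mid \Diamond A$. ${\sf GL}$ is the Hilbert system containing all classical propositional tautologies, the axioms $\Box(A\to B)\to(\Box A\to\Box B)$, $\Box A\to\Box\Box A$ and $\Box(\Box A\to A)\to\Box A$, closed under modus ponens and necessitation (from $A$ infer $\Box A$). ($\Diamond$ is interpreted classically as dual to $\Box$ in ${\sf GL}$.) Labelled sequents $\mathcal R,\Gamma\Rightarrow\Delta$ with $\mathcal R$ a set of relational atoms $xRy$ and $\Gamma,\Delta$ multisets of labelled formulas $x:A$. $\mathsf{labK4}$ rules (premisses / conclusion): id $\mathcal R,x:p\Rightarrow x:p$; $\bot$L $\mathcal R,x:\bot,\Gamma\Rightarrow\Delta$; cut: $\mathcal R,\Gamma\Rightarrow\Delta,x:A$ and $\mathcal R,\Gamma',x:A\Rightarrow\Delta'$ / $\mathcal R,\Gamma,\Gamma'\Rightarrow\Delta,\Delta'$; left/right weakening and contraction; thinning $\mathcal R,\Gamma\Rightarrow\Delta$ / $\mathcal R,\mathcal R',\Gamma\Rightarrow\Delta$; $\to$L: $\mathcal R,\Gamma\Rightarrow\Delta,x:A$ and $\mathcal R,\Gamma',x:B\Rightarrow\Delta'$ / $\mathcal R,\Gamma,\Gamma',x:A\to B\Rightarrow\Delta,\Delta'$; $\to$R: $\mathcal R,\Gamma,x:A\Rightarrow\Delta,x:B$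 / $\mathcal R,\Gamma\Rightarrow\Delta,x:A\to B$; $\wedge$L, $\wedge$R, $\vee$L, $\vee$R as in Gentzen's LK on labelled formulas with the same label; $\Diamond$L ($y$ fresh): $\mathcal R,xRy,\Gamma,y:A\Rightarrow\Delta$ / $\mathcal R,\Gamma,x:\Diamond A\Rightarrow\Delta$; $\Diamond$R: $\mathcal R,xRy,\Gamma\Rightarrow\Delta,y:A$ / $\mathcal R,xRy,\Gamma\Rightarrow\Delta,x:\Diamond A$; $\Box$R ($y$ fresh): $\mathcal R,xRy,\Gamma\Rightarrow\Delta,y:A$ / $\mathcal R,\Gamma\Rightarrow\Delta,x:\Box A$; $\Box$L: $\mathcal R,xRy,\Gamma,y:A\Rightarrow\Delta$ / $\mathcal R,xRy,\Gamma,x:\Box A\Rightarrow\Delta$; tr: $\mathcal R,xRy,yRz,xRz,\Gamma\Rightarrow\Delta$ / $\mathcal R,xRy,yRz,\Gamma\Rightarrow\Delta$. A preproof is a possibly infinite tree of rule instances whose leaves are zero-premiss rules; a trace along an infinite branch $(S_i)$ is a sequence of labels $(x_i)_{i\ge k}$ with, for each $i$, $x_i=x_{i+1}$ or $x_iRx_{i+1}$ in the relational context of $S_i$ (progress point); progressing = infinitely many progress points; an $\infty$-proof is a preproof all of whose infinite branches have a progressing trace. *)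

theory Defs
  imports "HOL-Library.Multiset"
begin

datatype 'a fm =
    Atom 'a
  | Bot
  | And "'a fm" "'a fm"
  | Or "'a fm" "'a fm"
  | Imp "'a fm" "'a fm"
  | Box "'a fm"
  | Dia "'a fm"

definition Neg :: "'a fm \<Rightarrow> 'a fm" where
  "Neg A = Imp A Bot"

definition Iff :: "'a fm \<Rightarrow> 'a fm \<Rightarrow> 'a fm" where
  "Iff A B = And (Imp A B) (Imp B A)"

text \<open>Propositional evaluation: atoms and modal formulas (Box A, Dia A) are treated
  as propositional variables, whose values are given by v.\<close>
fun peval :: "('a fm \<Rightarrow> bool) \<Rightarrow> 'a fm \<Rightarrow> bool" where
  "peval v (Atom p) = v (Atom p)"
| "peval v Bot = False"
| "peval v (And A B) = (peval v A \<and> peval v B)"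
| "peval v (Or A B) = (peval v A \<or> peval v B)"
| "peval v (Imp A B) = (peval v A \<longrightarrow> peval v B)"
| "peval v (Box A) = v (Box A)"
| "peval v (Dia A) = v (Dia A)"

definition tautology :: "'a fm \<Rightarrow> bool" where
  "tautology A \<longleftrightarrow> (\<forall>v. peval v A)"

inductive GL :: "'a fm \<Rightarrow> bool" where
  taut: "tautology A \<Longrightarrow> GL A"
| axK: "GL (Imp (Box (Imp A B)) (Imp (Box A) (Box B)))"
| ax4: "GL (Imp (Box A) (Box (Box A)))"
| axGL: "GL (Imp (Box (Imp (Box A) A)) (Box A))"
| axDual: "GL (Iff (Dia A) (Neg (Box (Neg A))))"
| mp: "GL (Imp A B) \<Longrightarrow> GL A \<Longrightarrow> GL B"
| nec: "GL A \<Longrightarrow> GL (Box A)"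

type_synonym label = nat
type_synonym 'a lfm = "label \<times> 'a fm"
type_synonym 'a sequent = "(label \<times> label) set \<times> 'a lfm multiset \<times> 'a lfm multiset"

definition labels :: "'a sequent \<Rightarrow> label set" where
  "labels S = (case S of (R, \<Gamma>, \<Delta>) \<Rightarrow>
     fst ` R \<union> snd ` R \<union> fst ` set_mset \<Gamma> \<union> fst ` set_mset \<Delta>)"

definition rel_ctx :: "'a sequent \<Rightarrow> (label \<times> label) set" where
  "rel_ctx S = fst S"

text \<open>rule_inst C Ps: C is the conclusion and Ps the list of premisses of an
  instance of a rule of labK4.\<close>
inductive rule_inst :: "'a sequent \<Rightarrow> 'a sequent list \<Rightarrow> bool" where
  ax_id: "rule_inst (R, {#(x, Atom p)#}, {#(x, Atom p)#}) []"
| ax_botL: "rule_inst (R, add_mset (x, Bot) \<Gamma>, \<Delta>) []"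
| cut: "rule_inst (R, \<Gamma> + \<Gamma>', \<Delta> + \<Delta>')
          [(R, \<Gamma>, add_mset (x, A) \<Delta>), (R, add_mset (x, A) \<Gamma>', \<Delta>')]"
| weakL: "rule_inst (R, add_mset (x, A) \<Gamma>, \<Delta>) [(R, \<Gamma>, \<Delta>)]"
| weakR: "rule_inst (R, \<Gamma>, add_mset (x, A) \<Delta>) [(R, \<Gamma>, \<Delta>)]"
| contrL: "rule_inst (R, add_mset (x, A) \<Gamma>, \<Delta>)
            [(R, add_mset (x, A) (add_mset (x, A) \<Gamma>), \<Delta>)]"
| contrR: "rule_inst (R, \<Gamma>, add_mset (x, A) \<Delta>)
            [(R, \<Gamma>, add_mset (x, A) (add_mset (x, A) \<Delta>))]"
| thin: "R \<subseteq> R' \<Longrightarrow> rule_inst (R', \<Gamma>, \<Delta>) [(R, \<Gamma>, \<Delta>)]"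
| impL: "rule_inst (R, add_mset (x, Imp A B) (\<Gamma> + \<Gamma>'), \<Delta> + \<Delta>')
          [(R, \<Gamma>, add_mset (x, A) \<Delta>), (R, add_mset (x, B) \<Gamma>', \<Delta>')]"
| impR: "rule_inst (R, \<Gamma>, add_mset (x, Imp A B) \<Delta>)
          [(R, add_mset (x, A) \<Gamma>, add_mset (x, B) \<Delta>)]"
| andL1: "rule_inst (R, add_mset (x, And A B) \<Gamma>, \<Delta>) [(R, add_mset (x, A) \<Gamma>, \<Delta>)]"
| andL2: "rule_inst (R, add_mset (x, And A B) \<Gamma>, \<Delta>) [(R, add_mset (x, B) \<Gamma>, \<Delta>)]"
| andR: "rule_inst (R, \<Gamma>, add_mset (x, And A B) \<Delta>)
          [(R, \<Gamma>, add_mset (x, A) \<Delta>), (R, \<Gamma>, add_mset (x, B) \<Delta>)]"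
| orL: "rule_inst (R, add_mset (x, Or A B) \<Gamma>, \<Delta>)
          [(R, add_mset (x, A) \<Gamma>, \<Delta>), (R, add_mset (x, B) \<Gamma>, \<Delta>)]"
| orR1: "rule_inst (R, \<Gamma>, add_mset (x, Or A B) \<Delta>) [(R, \<Gamma>, add_mset (x, A) \<Delta>)]"
| orR2: "rule_inst (R, \<Gamma>, add_mset (x, Or A B) \<Delta>) [(R, \<Gamma>, add_mset (x, B) \<Delta>)]"
| diaL: "y \<notin> labels (R, add_mset (x, Dia A) \<Gamma>, \<Delta>) \<Longrightarrow>
          rule_inst (R, add_mset (x, Dia A) \<Gamma>, \<Delta>)
            [(insert (x, y) R, add_mset (y, A) \<Gamma>, \<Delta>)]"
| diaR: "(x, y) \<in> R \<Longrightarrow>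
          rule_inst (R, \<Gamma>, add_mset (x, Dia A) \<Delta>) [(R, \<Gamma>, add_mset (y, A) \<Delta>)]"
| boxR: "y \<notin> labels (R, \<Gamma>, add_mset (x, Box A) \<Delta>) \<Longrightarrow>
          rule_inst (R, \<Gamma>, add_mset (x, Box A) \<Delta>)
            [(insert (x, y) R, \<Gamma>, add_mset (y, A) \<Delta>)]"
| boxL: "(x, y) \<in> R \<Longrightarrow>
          rule_inst (R, add_mset (x, Box A) \<Gamma>, \<Delta>) [(R, add_mset (y, A) \<Gamma>, \<Delta>)]"
| tr: "(x, y) \<in> R \<Longrightarrow> (y, z) \<in> R \<Longrightarrow>
          rule_inst (R, \<Gamma>, \<Delta>) [(insert (x, z) R, \<Gamma>, \<Delta>)]"

codatatype 'b ptree = PNode (root: 'b) (kids: "'b ptree list")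

coinductive preproof :: "'a sequent ptree \<Rightarrow> bool" where
  "rule_inst (root t) (map root (kids t)) \<Longrightarrow> (\<forall>u \<in> set (kids t). preproof u)
     \<Longrightarrow> preproof t"

definition infinite_branch :: "'b ptree \<Rightarrow> (nat \<Rightarrow> 'b ptree) \<Rightarrow> bool" where
  "infinite_branch t b \<longleftrightarrow> b 0 = t \<and> (\<forall>i. b (Suc i) \<in> set (kids (b i)))"

definition is_trace :: "(nat \<Rightarrow> 'a sequent) \<Rightarrow> nat \<Rightarrow> (nat \<Rightarrow> label) \<Rightarrow> bool" where
  "is_trace S k xs \<longleftrightarrow>
     (\<forall>i\<ge>k. xs i = xs (Suc i) \<or> (xs i, xs (Suc i)) \<in> rel_ctx (S i))"

definition progress_point :: "(nat \<Rightarrow> 'a sequent) \<Rightarrow> (nat \<Rightarrow> label) \<Rightarrow> nat \<Rightarrow> bool" where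
  "progress_point S xs i \<longleftrightarrow> (xs i, xs (Suc i)) \<in> rel_ctx (S i)"

definition progressing_trace :: "(nat \<Rightarrow> 'a sequent) \<Rightarrow> nat \<Rightarrow> (nat \<Rightarrow> label) \<Rightarrow> bool" where
  "progressing_trace S k xs \<longleftrightarrow>
     is_trace S k xs \<and> infinite {i. i \<ge> k \<and> progress_point S xs i}"

definition inf_proof :: "'a sequent ptree \<Rightarrow> bool" where
  "inf_proof t \<longleftrightarrow> preproof t \<and>
     (\<forall>b. infinite_branch t b \<longrightarrow>
        (\<exists>k xs. progressing_trace (\<lambda>i. root (b i)) k xs))"

definition has_inf_proof :: "'a sequent \<Rightarrow> bool" where
  "has_inf_proof S \<longleftrightarrow> (\<exists>t. root t = S \<and> inf_proof t)"

end

theory Submission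
  imports Defs "HOL-Library.Infinite_Set"
begin

(* Infinity-provability is closed under every rule of labK4,
   because a branch of the composed tree that enters a premiss's infinity-proof inherits a
   progressing trace from it. Tautologies then follow by backward propositional proof search, and
   K, 4, the duality axiom, modus ponens (a cut) and necessitation have finite derivations.
   Only Loeb's axiom needs an infinite proof: starting from  x:Box(Box A -> A) => x:Box A,
   the rules Box-R, Box-L, Imp-L and a cut with  y:Box(Box A -> A)  (for the fresh successor y
   of x) lead to the same sequent at y. Repeating this forever gives a single infinite branch,
   along which the labels x, y, ... form a trace progressing once per round. *)

lemma infinite_branch_suffix:
  "infinite_branch t b \<Longrightarrow> infinite_branch (b n) (\<lambda>i. b (i + n))"
  unfolding infinite_branch_def by auto

lemma progressing_trace_shift:
  assumes "progressing_trace (\<lambda>i. S (i + n)) k xs"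
  shows "progressing_trace S (k + n) (\<lambda>i. xs (i - n))"
proof -
  have "is_trace S (k + n) (\<lambda>i. xs (i - n))"
    using assms unfolding progressing_trace_def is_trace_def
    by (metis (no_types, lifting) Suc_diff_le add_diff_cancel_right' diff_le_mono
        le_add2 le_add_diff_inverse2 le_trans)
  moreover
  have "(\<lambda>i. i + n) ` {i. i \<ge> k \<and> progress_point (\<lambda>i. S (i + n)) xs i}
      \<subseteq> {i. i \<ge> k + n \<and> progress_point S (\<lambda>i. xs (i - n)) i}"
    by (auto simp: progress_point_def Suc_diff_le)
  moreover
  have "infinite ((\<lambda>i. i + n) ` {i. i \<ge> k \<and> progress_point (\<lambda>i. S (i + n)) xs i})"
    using assms unfolding progressing_trace_def by (simp add: finite_image_iff)
  ultimately show ?thesis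
    unfolding progressing_trace_def using finite_subset by blast
qed

lemma progressing_trace_if_enters_inf_proof:
  assumes "infinite_branch t b" and "inf_proof (b n)"
  shows "\<exists>k xs. progressing_trace (\<lambda>i. root (b i)) k xs"
proof -
  obtain k xs where "progressing_trace (\<lambda>i. root (b (i + n))) k xs"
    using assms infinite_branch_suffix unfolding inf_proof_def by blast
  then show ?thesis
    using progressing_trace_shift[of "\<lambda>i. root (b i)"] by blast
qed

definition some_inf_proof :: "'a sequent \<Rightarrow> 'a sequent ptree" where
  "some_inf_proof S = (SOME t. root t = S \<and> inf_proof t)"

lemma some_inf_proof_spec:
  "has_inf_proof S \<Longrightarrow> root (some_inf_proof S) = S \<and> inf_proof (some_inf_proof S)"
  unfolding has_inf_proof_def some_inf_proof_def by (rule someI_ex)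

lemma has_inf_proof_rule:
  assumes rule: "rule_inst C Ps" and prems: "\<forall>P\<in>set Ps. has_inf_proof P"
  shows "has_inf_proof C"
proof -
  define t where "t = PNode C (map some_inf_proof Ps)"
  have roots: "root (some_inf_proof P) = P \<and> inf_proof (some_inf_proof P)" if "P \<in> set Ps" for P
    using that prems some_inf_proof_spec by blast
  have kids: "inf_proof u" if "u \<in> set (kids t)" for u
    using that roots by (auto simp: t_def)
  have "map root (kids t) = Ps"
    using roots by (simp add: t_def map_idI)
  then have "preproof t"
    using rule kids by (intro preproof.intros) (auto simp: t_def inf_proof_def)
  moreover have "\<exists>k xs. progressing_trace (\<lambda>i. root (b i)) k xs" if b: "infinite_branch t b" for b
  proof -
    have "b 1 \<in> set (kids t)"
      using b unfolding infinite_branch_def by (metis One_nat_def)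
    with b kids show ?thesis
      using progressing_trace_if_enters_inf_proof by blast
  qed
  ultimately show ?thesis
    unfolding has_inf_proof_def inf_proof_def by (intro exI[of _ t]) (auto simp: t_def)
qed

lemma has_inf_proof_rule0: "rule_inst C [] \<Longrightarrow> has_inf_proof C"
  by (rule has_inf_proof_rule) auto

lemma has_inf_proof_rule1: "rule_inst C [P] \<Longrightarrow> has_inf_proof P \<Longrightarrow> has_inf_proof C"
  by (rule has_inf_proof_rule) auto

lemma has_inf_proof_rule2:
  "rule_inst C [P, Q] \<Longrightarrow> has_inf_proof P \<Longrightarrow> has_inf_proof Q \<Longrightarrow> has_inf_proof C"
  by (rule has_inf_proof_rule) auto

lemma has_inf_proof_thin:
  "has_inf_proof (R, \<Gamma>, \<Delta>) \<Longrightarrow> R \<subseteq> R' \<Longrightarrow> has_inf_proof (R', \<Gamma>, \<Delta>)"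
  by (rule has_inf_proof_rule1[OF rule_inst.thin])

lemma has_inf_proof_weaken:
  "has_inf_proof (R, \<Gamma>, \<Delta>) \<Longrightarrow> has_inf_proof (R, \<Gamma> + \<Gamma>', \<Delta> + \<Delta>')"
proof (induction \<Gamma>' arbitrary: \<Gamma>)
  case empty
  then show ?case
  proof (induction \<Delta>' arbitrary: \<Delta>)
    case (add a \<Delta>')
    then show ?case
      using has_inf_proof_rule1[OF rule_inst.weakR[of R \<Gamma> "fst a" "snd a" "\<Delta> + \<Delta>'"]] by simp
  qed simp
next
  case (add a \<Gamma>')
  then show ?case
    using has_inf_proof_rule1[OF rule_inst.weakL[of R "fst a" "snd a" "\<Gamma> + \<Gamma>'" "\<Delta> + \<Delta>'"]]
    by simp
qed

lemma has_inf_proof_contract_left: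
  "has_inf_proof (R, \<Gamma> + \<Gamma> + \<Sigma>, \<Delta>) \<Longrightarrow> has_inf_proof (R, \<Gamma> + \<Sigma>, \<Delta>)"
proof (induction \<Gamma> arbitrary: \<Sigma>)
  case (add a \<Gamma>)
  have "has_inf_proof (R, \<Gamma> + add_mset a (add_mset a \<Sigma>), \<Delta>)"
    by (rule add.IH) (use add.prems in \<open>simp add: add_mset_commute\<close>)
  then have "has_inf_proof (R, add_mset a (add_mset a (\<Gamma> + \<Sigma>)), \<Delta>)"
    by simp
  then show ?case
    using has_inf_proof_rule1[OF rule_inst.contrL[of R "fst a" "snd a" "\<Gamma> + \<Sigma>" \<Delta>]] by simp
qed simp

lemma has_inf_proof_contract_right:
  "has_inf_proof (R, \<Gamma>, \<Delta> + \<Delta> + \<Sigma>) \<Longrightarrow> has_inf_proof (R, \<Gamma>, \<Delta> + \<Sigma>)"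
proof (induction \<Delta> arbitrary: \<Sigma>)
  case (add a \<Delta>)
  have "has_inf_proof (R, \<Gamma>, \<Delta> + add_mset a (add_mset a \<Sigma>))"
    by (rule add.IH) (use add.prems in \<open>simp add: add_mset_commute\<close>)
  then have "has_inf_proof (R, \<Gamma>, add_mset a (add_mset a (\<Delta> + \<Sigma>)))"
    by simp
  then show ?case
    using has_inf_proof_rule1[OF rule_inst.contrR[of R \<Gamma> "fst a" "snd a" "\<Delta> + \<Sigma>"]] by simp
qed simp

lemma has_inf_proof_identity: "has_inf_proof (R, {#(x, C)#}, {#(x, C)#})"
proof (induction C arbitrary: R x)
  case (Atom p)
  show ?case by (rule has_inf_proof_rule0[OF rule_inst.ax_id])
next
  case Bot
  show ?case using has_inf_proof_rule0[OF rule_inst.ax_botL[of R x "{#}" "{#(x, Bot)#}"]] by simp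
next
  case (And A B)
  have "has_inf_proof (R, {#(x, And A B)#}, {#(x, A)#})"
    using has_inf_proof_rule1[OF rule_inst.andL1[of R x A B "{#}"]] And by simp
  moreover have "has_inf_proof (R, {#(x, And A B)#}, {#(x, B)#})"
    using has_inf_proof_rule1[OF rule_inst.andL2[of R x A B "{#}"]] And by simp
  ultimately show ?case
    using has_inf_proof_rule2[OF rule_inst.andR[of R _ x A B "{#}"]] by simp
next
  case (Or A B)
  have "has_inf_proof (R, {#(x, A)#}, {#(x, Or A B)#})"
    using has_inf_proof_rule1[OF rule_inst.orR1[of R _ x A B "{#}"]] Or by simp
  moreover have "has_inf_proof (R, {#(x, B)#}, {#(x, Or A B)#})"
    using has_inf_proof_rule1[OF rule_inst.orR2[of R _ x A B "{#}"]] Or by simp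
  ultimately show ?case
    using has_inf_proof_rule2[OF rule_inst.orL[of R x A B "{#}"]] by simp
next
  case (Imp A B)
  have "has_inf_proof (R, add_mset (x, Imp A B) ({#(x, A)#} + {#}), {#} + {#(x, B)#})"
    by (rule has_inf_proof_rule2[OF rule_inst.impL]) (use Imp in simp_all)
  then have "has_inf_proof (R, add_mset (x, A) {#(x, Imp A B)#}, add_mset (x, B) {#})"
    by (simp add: add_mset_commute)
  then show ?case by (rule has_inf_proof_rule1[OF rule_inst.impR])
next
  case (Box C)
  have "has_inf_proof ({(x, Suc x)}, add_mset (x, Box C) {#}, {#(Suc x, C)#})"
    using Box by (intro has_inf_proof_rule1[OF rule_inst.boxL]) auto
  then have "has_inf_proof ({}, {#(x, Box C)#}, add_mset (x, Box C) {#})"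
    by (intro has_inf_proof_rule1[OF rule_inst.boxR[where y = "Suc x"]]) (auto simp: labels_def)
  then show ?case by (rule has_inf_proof_thin) simp
next
  case (Dia C)
  have "has_inf_proof ({(x, Suc x)}, {#(Suc x, C)#}, add_mset (x, Dia C) {#})"
    using Dia by (intro has_inf_proof_rule1[OF rule_inst.diaR]) auto
  then have "has_inf_proof ({}, add_mset (x, Dia C) {#}, {#(x, Dia C)#})"
    by (intro has_inf_proof_rule1[OF rule_inst.diaL[where y = "Suc x"]]) (auto simp: labels_def)
  then show ?case by (rule has_inf_proof_thin) simp
qed

lemma has_inf_proof_andL:
  assumes "has_inf_proof (R, add_mset (x, A) (add_mset (x, B) \<Gamma>), \<Delta>)"
  shows "has_inf_proof (R, add_mset (x, And A B) \<Gamma>, \<Delta>)"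
proof -
  have "has_inf_proof (R, add_mset (x, And A B) (add_mset (x, A) \<Gamma>), \<Delta>)"
    using has_inf_proof_rule1[OF rule_inst.andL2[of R x A B "add_mset (x, A) \<Gamma>" \<Delta>]] assms
    by (simp add: add_mset_commute)
  then have "has_inf_proof (R, add_mset (x, And A B) (add_mset (x, And A B) \<Gamma>), \<Delta>)"
    using has_inf_proof_rule1[OF rule_inst.andL1[of R x A B "add_mset (x, And A B) \<Gamma>" \<Delta>]]
    by (simp add: add_mset_commute)
  then show ?thesis by (rule has_inf_proof_rule1[OF rule_inst.contrL])
qed

lemma has_inf_proof_orR:
  assumes "has_inf_proof (R, \<Gamma>, add_mset (x, A) (add_mset (x, B) \<Delta>))"
  shows "has_inf_proof (R, \<Gamma>, add_mset (x, Or A B) \<Delta>)"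
proof -
  have "has_inf_proof (R, \<Gamma>, add_mset (x, Or A B) (add_mset (x, A) \<Delta>))"
    using has_inf_proof_rule1[OF rule_inst.orR2[of R \<Gamma> x A B "add_mset (x, A) \<Delta>"]] assms
    by (simp add: add_mset_commute)
  then have "has_inf_proof (R, \<Gamma>, add_mset (x, Or A B) (add_mset (x, Or A B) \<Delta>))"
    using has_inf_proof_rule1[OF rule_inst.orR1[of R \<Gamma> x A B "add_mset (x, Or A B) \<Delta>"]]
    by (simp add: add_mset_commute)
  then show ?thesis by (rule has_inf_proof_rule1[OF rule_inst.contrR])
qed

lemma has_inf_proof_impL:
  assumes "has_inf_proof (R, \<Gamma>, add_mset (x, A) \<Delta>)" and "has_inf_proof (R, add_mset (x, B) \<Gamma>, \<Delta>)"
  shows "has_inf_proof (R, add_mset (x, Imp A B) \<Gamma>, \<Delta>)"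
proof -
  have "has_inf_proof (R, add_mset (x, Imp A B) (\<Gamma> + \<Gamma>), \<Delta> + \<Delta>)"
    using has_inf_proof_rule2[OF rule_inst.impL] assms .
  then have "has_inf_proof (R, \<Gamma> + \<Gamma> + {#(x, Imp A B)#}, \<Delta> + \<Delta> + {#})"
    by simp
  then have "has_inf_proof (R, \<Gamma> + {#(x, Imp A B)#}, \<Delta> + \<Delta> + {#})"
    by (rule has_inf_proof_contract_left)
  then have "has_inf_proof (R, \<Gamma> + {#(x, Imp A B)#}, \<Delta> + {#})"
    by (rule has_inf_proof_contract_right)
  then show ?thesis by simp
qed

definition prop_valid :: "'a fm multiset \<Rightarrow> 'a fm multiset \<Rightarrow> bool" where
  "prop_valid \<Gamma> \<Delta> \<longleftrightarrow> (\<forall>v. (\<forall>A\<in>#\<Gamma>. peval v A) \<longrightarrow> (\<exists>A\<in>#\<Delta>. peval v A))"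

fun compound :: "'a fm \<Rightarrow> bool" where
  "compound (And A B) = True"
| "compound (Or A B) = True"
| "compound (Imp A B) = True"
| "compound _ = False"

abbreviation at_label :: "label \<Rightarrow> 'a fm multiset \<Rightarrow> 'a lfm multiset" where
  "at_label x M \<equiv> image_mset (Pair x) M"

lemma has_inf_proof_prop_valid_noncompound:
  assumes valid: "prop_valid \<Gamma> \<Delta>" and noncompound: "\<forall>C\<in>#\<Gamma> + \<Delta>. \<not> compound C"
  shows "has_inf_proof (R, at_label x \<Gamma>, at_label x \<Delta>)"
proof (cases "Bot \<in># \<Gamma>")
  case True
  then obtain \<Gamma>' where "\<Gamma> = add_mset Bot \<Gamma>'" by (metis multi_member_split)
  then show ?thesis using has_inf_proof_rule0[OF rule_inst.ax_botL] by simp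
next
  case False
  have peval_var: "peval v C = v C" if "C \<in># \<Gamma> + \<Delta>" "C \<noteq> Bot" for v C
  proof -
    have "\<not> compound C" using that(1) noncompound by blast
    then show ?thesis using that(2) by (cases C) auto
  qed
  \<comment> \<open>The valuation making exactly the formulas of \<Gamma> true refutes the sequent unless
    \<Gamma> and \<Delta> share a formula.\<close>
  obtain C where "C \<in># \<Delta>" "peval (\<lambda>C. C \<in># \<Gamma>) C"
    using valid False peval_var unfolding prop_valid_def
    by (metis (mono_tags, lifting) union_iff)
  then have "C \<in># \<Gamma>" "C \<in># \<Delta>"
    using peval_var by (metis peval.simps(2) union_iff)+
  then obtain \<Gamma>' \<Delta>' where "\<Gamma> = add_mset C \<Gamma>'" "\<Delta> = add_mset C \<Delta>'"
    by (metis multi_member_split)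
  then show ?thesis
    using has_inf_proof_weaken[OF has_inf_proof_identity, of R x C "at_label x \<Gamma>'" "at_label x \<Delta>'"]
    by simp
qed

lemma has_inf_proof_prop_valid:
  "prop_valid \<Gamma> \<Delta> \<Longrightarrow> has_inf_proof (R, at_label x \<Gamma>, at_label x \<Delta>)"
proof (induction "sum_mset (image_mset size \<Gamma>) + sum_mset (image_mset size \<Delta>)"
    arbitrary: \<Gamma> \<Delta> rule: less_induct)
  case less
  consider (left) C \<Gamma>' where "\<Gamma> = add_mset C \<Gamma>'" "compound C"
    | (right) C \<Delta>' where "\<Delta> = add_mset C \<Delta>'" "compound C"
    | (noncompound) "\<forall>C\<in>#\<Gamma> + \<Delta>. \<not> compound C"
    by (metis multi_member_split union_iff)
  then show ?case
  proof cases
    case left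
    then show ?thesis
    proof (cases C)
      case (And A B)
      have "has_inf_proof (R, at_label x (add_mset A (add_mset B \<Gamma>')), at_label x \<Delta>)"
        using less left And by (intro less.hyps) (auto simp: prop_valid_def)
      then show ?thesis using left And has_inf_proof_andL by simp
    next
      case (Or A B)
      have "has_inf_proof (R, at_label x (add_mset A \<Gamma>'), at_label x \<Delta>)"
        "has_inf_proof (R, at_label x (add_mset B \<Gamma>'), at_label x \<Delta>)"
        using less left Or by (intro less.hyps; auto simp: prop_valid_def)+
      then show ?thesis using left Or has_inf_proof_rule2[OF rule_inst.orL] by simp
    next
      case (Imp A B)
      have "has_inf_proof (R, at_label x \<Gamma>', at_label x (add_mset A \<Delta>))"
        "has_inf_proof (R, at_label x (add_mset B \<Gamma>'), at_label x \<Delta>)"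
        using less left Imp by (intro less.hyps; auto simp: prop_valid_def)+
      then show ?thesis using left Imp has_inf_proof_impL by simp
    qed (use left in auto)
  next
    case right
    then show ?thesis
    proof (cases C)
      case (And A B)
      have "has_inf_proof (R, at_label x \<Gamma>, at_label x (add_mset A \<Delta>'))"
        "has_inf_proof (R, at_label x \<Gamma>, at_label x (add_mset B \<Delta>'))"
        using less right And by (intro less.hyps; auto simp: prop_valid_def)+
      then show ?thesis using right And has_inf_proof_rule2[OF rule_inst.andR] by simp
    next
      case (Or A B)
      have "has_inf_proof (R, at_label x \<Gamma>, at_label x (add_mset A (add_mset B \<Delta>')))"
        using less right Or by (intro less.hyps) (auto simp: prop_valid_def)
      then show ?thesis using right Or has_inf_proof_orR by simp
    next
      case (Imp A B)
      have "has_inf_proof (R, at_label x (add_mset A \<Gamma>), at_label x (add_mset B \<Delta>'))"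
        using less right Imp by (intro less.hyps) (auto simp: prop_valid_def)
      then show ?thesis using right Imp has_inf_proof_rule1[OF rule_inst.impR] by simp
    qed (use right in auto)
  next
    case noncompound
    then show ?thesis using less.prems has_inf_proof_prop_valid_noncompound by blast
  qed
qed

lemma has_inf_proof_tautology: "tautology A \<Longrightarrow> has_inf_proof (R, {#}, {#(x, A)#})"
  using has_inf_proof_prop_valid[of "{#}" "{#A#}" R x] by (simp add: prop_valid_def tautology_def)

lemma has_inf_proof_box_trans: "has_inf_proof ({(x, y)}, {#(x, Box C)#}, {#(y, Box C)#})"
proof -
  define z where "z = Suc (x + y)"
  have "has_inf_proof (insert (x, z) {(y, z), (x, y)}, add_mset (x, Box C) {#}, {#(z, C)#})"
    by (rule has_inf_proof_rule1[OF rule_inst.boxL[where y = z]]) (simp_all add: has_inf_proof_identity)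
  then have "has_inf_proof ({(y, z), (x, y)}, {#(x, Box C)#}, add_mset (z, C) {#})"
    by - (rule has_inf_proof_rule1[OF rule_inst.tr[of x y _ z]], auto)
  then have "has_inf_proof (insert (y, z) {(x, y)}, {#(x, Box C)#}, add_mset (z, C) {#})"
    by simp
  then show ?thesis
    using has_inf_proof_rule1[OF rule_inst.boxR[of z "{(x, y)}" "{#(x, Box C)#}" y C "{#}"]]
    by (auto simp: labels_def z_def)
qed

lemma has_inf_proof_ax4: "has_inf_proof (R, {#}, {#(x, Imp (Box A) (Box (Box A)))#})"
proof -
  have "has_inf_proof ({}, {#(x, Box A)#}, add_mset (x, Box (Box A)) {#})"
    using has_inf_proof_rule1[OF rule_inst.boxR[of "Suc x" "{}" "{#(x, Box A)#}" x "Box A" "{#}"]]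
      has_inf_proof_box_trans[of x "Suc x" A]
    by (auto simp: labels_def)
  then have "has_inf_proof (R, add_mset (x, Box A) {#}, add_mset (x, Box (Box A)) {#})"
    by (rule has_inf_proof_thin) simp
  then show ?thesis by (rule has_inf_proof_rule1[OF rule_inst.impR])
qed

lemma has_inf_proof_axK:
  "has_inf_proof (R, {#}, {#(x, Imp (Box (Imp A B)) (Imp (Box A) (Box B)))#})"
proof -
  define y where "y = Suc x"
  have "has_inf_proof ({(x, y)}, at_label y {#Imp A B, A#}, at_label y {#B#})"
    by (rule has_inf_proof_prop_valid) (auto simp: prop_valid_def)
  then have "has_inf_proof ({(x, y)}, add_mset (x, Box (Imp A B)) {#(y, A)#}, {#(y, B)#})"
    by - (rule has_inf_proof_rule1[OF rule_inst.boxL[where y = y]], auto)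
  then have "has_inf_proof ({(x, y)}, add_mset (y, A) {#(x, Box (Imp A B))#}, {#(y, B)#})"
    by (simp add: add_mset_commute)
  then have "has_inf_proof ({(x, y)}, add_mset (x, Box A) {#(x, Box (Imp A B))#}, {#(y, B)#})"
    by - (rule has_inf_proof_rule1[OF rule_inst.boxL[where y = y]], auto)
  then have "has_inf_proof ({}, {#(x, Box A), (x, Box (Imp A B))#}, add_mset (x, Box B) {#})"
    using has_inf_proof_rule1[OF rule_inst.boxR[of y "{}" "{#(x, Box A), (x, Box (Imp A B))#}" x B "{#}"]]
    by (auto simp: labels_def y_def)
  then have "has_inf_proof (R, add_mset (x, Box A) {#(x, Box (Imp A B))#}, add_mset (x, Box B) {#})"
    by (rule has_inf_proof_thin) simp
  then have "has_inf_proof (R, {#(x, Box (Imp A B))#}, add_mset (x, Imp (Box A) (Box B)) {#})"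
    by (rule has_inf_proof_rule1[OF rule_inst.impR])
  then show ?thesis by (rule has_inf_proof_rule1[OF rule_inst.impR])
qed

lemma has_inf_proof_dia_imp_not_box_not:
  "has_inf_proof (R, {#}, {#(x, Imp (Dia A) (Imp (Box (Imp A Bot)) Bot))#})"
proof -
  define y where "y = Suc x"
  have "has_inf_proof ({(x, y)}, at_label y {#Imp A Bot, A#}, at_label y {#})"
    by (rule has_inf_proof_prop_valid) (auto simp: prop_valid_def)
  then have "has_inf_proof ({(x, y)}, add_mset (y, Imp A Bot) {#(y, A)#}, {#(x, Bot)#})"
    using has_inf_proof_weaken[of "{(x, y)}" _ "{#}" "{#}" "{#(x, Bot)#}"] by simp
  then have "has_inf_proof ({(x, y)}, add_mset (x, Box (Imp A Bot)) {#(y, A)#}, {#(x, Bot)#})"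
    by - (rule has_inf_proof_rule1[OF rule_inst.boxL], auto)
  then have "has_inf_proof (insert (x, y) {}, add_mset (y, A) {#(x, Box (Imp A Bot))#}, {#(x, Bot)#})"
    by (simp add: add_mset_commute)
  then have "has_inf_proof ({}, add_mset (x, Dia A) {#(x, Box (Imp A Bot))#}, {#(x, Bot)#})"
    by - (rule has_inf_proof_rule1[OF rule_inst.diaL], auto simp: labels_def y_def)
  then have "has_inf_proof (R, add_mset (x, Box (Imp A Bot)) {#(x, Dia A)#}, add_mset (x, Bot) {#})"
    by (auto intro: has_inf_proof_thin simp: add_mset_commute)
  then have "has_inf_proof (R, {#(x, Dia A)#}, add_mset (x, Imp (Box (Imp A Bot)) Bot) {#})"
    by (rule has_inf_proof_rule1[OF rule_inst.impR])
  then show ?thesis by (rule has_inf_proof_rule1[OF rule_inst.impR])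
qed

lemma has_inf_proof_not_box_not_imp_dia:
  "has_inf_proof (R, {#}, {#(x, Imp (Imp (Box (Imp A Bot)) Bot) (Dia A))#})"
proof -
  define y where "y = Suc x"
  have "has_inf_proof ({(x, y)}, at_label y {#}, at_label y {#Imp A Bot, A#})"
    by (rule has_inf_proof_prop_valid) (auto simp: prop_valid_def)
  then have "has_inf_proof ({(x, y)}, {#}, add_mset (y, A) {#(y, Imp A Bot)#})"
    by (simp add: add_mset_commute)
  then have "has_inf_proof ({(x, y)}, {#}, add_mset (x, Dia A) {#(y, Imp A Bot)#})"
    by - (rule has_inf_proof_rule1[OF rule_inst.diaR], auto)
  then have "has_inf_proof (insert (x, y) {}, {#}, add_mset (y, Imp A Bot) {#(x, Dia A)#})"
    by (simp add: add_mset_commute)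
  then have "has_inf_proof ({}, {#}, add_mset (x, Box (Imp A Bot)) {#(x, Dia A)#})"
    by - (rule has_inf_proof_rule1[OF rule_inst.boxR], auto simp: labels_def y_def)
  then have "has_inf_proof (R, {#}, add_mset (x, Box (Imp A Bot)) {#(x, Dia A)#})"
    by (rule has_inf_proof_thin) simp
  moreover have "has_inf_proof (R, add_mset (x, Bot) {#}, {#})"
    by (rule has_inf_proof_rule0[OF rule_inst.ax_botL])
  ultimately have "has_inf_proof (R, add_mset (x, Imp (Box (Imp A Bot)) Bot) {#}, {#(x, Dia A)#})"
    using has_inf_proof_rule2[OF rule_inst.impL[of R x _ _ "{#}" "{#}" "{#(x, Dia A)#}" "{#}"]]
    by simp
  then show ?thesis by (rule has_inf_proof_rule1[OF rule_inst.impR])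
qed

lemma has_inf_proof_axDual: "has_inf_proof (R, {#}, {#(x, Iff (Dia A) (Neg (Box (Neg A))))#})"
  unfolding Iff_def Neg_def
  by (rule has_inf_proof_rule2[OF rule_inst.andR[of R "{#}" x _ _ "{#}"]])
    (simp_all add: has_inf_proof_dia_imp_not_box_not has_inf_proof_not_box_not_imp_dia)

lemma has_inf_proof_mp:
  assumes "has_inf_proof (R, {#}, {#(x, Imp A B)#})" and "has_inf_proof (R, {#}, {#(x, A)#})"
  shows "has_inf_proof (R, {#}, {#(x, B)#})"
proof -
  have "has_inf_proof (R, add_mset (x, Imp A B) {#}, {#(x, B)#})"
    using has_inf_proof_rule2[OF rule_inst.impL[of R x A B "{#}" "{#}" "{#}" "{#(x, B)#}"]]
      assms(2) has_inf_proof_identity[of R x B]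
    by simp
  then show ?thesis
    using has_inf_proof_rule2[OF rule_inst.cut[of R "{#}" "{#}" "{#}" "{#(x, B)#}" x "Imp A B"]] assms(1)
    by simp
qed

lemma has_inf_proof_nec:
  assumes "has_inf_proof ({}, {#}, {#(Suc x, A)#})"
  shows "has_inf_proof ({}, {#}, {#(x, Box A)#})"
proof -
  have "has_inf_proof ({(x, Suc x)}, {#}, add_mset (Suc x, A) {#})"
    using assms by (rule has_inf_proof_thin) simp
  then show ?thesis
    using has_inf_proof_rule1[OF rule_inst.boxR[of "Suc x" "{}" "{#}" x A "{#}"]]
    by (auto simp: labels_def)
qed

lemma Suc_div_mod_6:
  "Suc n div 6 = (if n mod 6 = 5 then Suc (n div 6) else n div 6)"
  "Suc n mod 6 = (if n mod 6 = 5 then 0 else Suc (n mod 6))"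
  by presburger+

(* Stage j of the round at label x, with y = Suc x; stage j is concluded from stage j + 1 by
   Box-R, contraction, Box-L, Imp-L, cut and thinning respectively, the last giving stage 0 at y. *)
definition loeb_stage :: "'a fm \<Rightarrow> label \<Rightarrow> nat \<Rightarrow> 'a sequent" where
  "loeb_stage A x j = (let y = Suc x; D = Box (Imp (Box A) A) in
     if j = 0 then ({}, {#(x, D)#}, {#(x, Box A)#})
     else if j = 1 then ({(x, y)}, {#(x, D)#}, {#(y, A)#})
     else if j = 2 then ({(x, y)}, {#(x, D), (x, D)#}, {#(y, A)#})
     else if j = 3 then ({(x, y)}, {#(y, Imp (Box A) A), (x, D)#}, {#(y, A)#})
     else if j = 4 then ({(x, y)}, {#(x, D)#}, {#(y, Box A)#})
     else ({(x, y)}, {#(y, D)#}, {#(y, Box A)#}))"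

(* Node n is stage n mod 6 at label n div 6. The other premisses of Imp-L and of the cut are
   closed by identity and by has_inf_proof_box_trans. *)
primcorec loeb_tree :: "'a fm \<Rightarrow> nat \<Rightarrow> 'a sequent ptree" where
  "loeb_tree A n = PNode (loeb_stage A (n div 6) (n mod 6))
     (let x = n div 6; y = Suc x in
      if n mod 6 = 3 then
        [loeb_tree A (Suc n), some_inf_proof ({(x, y)}, {#(y, A)#}, {#(y, A)#})]
      else if n mod 6 = 4 then
        [some_inf_proof ({(x, y)}, {#(x, Box (Imp (Box A) A))#}, {#(y, Box (Imp (Box A) A))#}),
         loeb_tree A (Suc n)]
      else [loeb_tree A (Suc n)])"

lemma loeb_tree_kids:
  assumes "u \<in> set (kids (loeb_tree A n))"
  shows "u = loeb_tree A (Suc n) \<or> inf_proof u"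
proof -
  define x where "x = n div 6"
  have "inf_proof (some_inf_proof ({(x, Suc x)}, {#(Suc x, A)#}, {#(Suc x, A)#}))"
    "inf_proof (some_inf_proof ({(x, Suc x)}, {#(x, Box (Imp (Box A) A))#},
       {#(Suc x, Box (Imp (Box A) A))#}))"
    using some_inf_proof_spec has_inf_proof_identity has_inf_proof_box_trans by blast+
  then show ?thesis
    using assms by (auto simp: Let_def split: if_splits simp flip: x_def)
qed

lemma loeb_tree_rule_inst:
  "rule_inst (root (loeb_tree A n)) (map root (kids (loeb_tree A n)))"
proof -
  define x j where "x = n div 6" and "j = n mod 6"
  define y D where "y = Suc x" and "D = Box (Imp (Box A) A)"
  define I L where "I = ({(x, y)}, {#(y, A)#}, {#(y, A)#})"
    and "L = ({(x, y)}, {#(x, D)#}, {#(y, D)#})"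
  have "root (some_inf_proof I) = I" "root (some_inf_proof L) = L"
    unfolding I_def L_def D_def
    using some_inf_proof_spec has_inf_proof_identity has_inf_proof_box_trans by blast+
  then have kids: "map root (kids (loeb_tree A n)) =
      (if j = 3 then [root (loeb_tree A (Suc n)), I]
       else if j = 4 then [L, root (loeb_tree A (Suc n))]
       else [root (loeb_tree A (Suc n))])"
    by (simp add: x_def j_def y_def D_def I_def L_def Let_def)
  have root: "root (loeb_tree A n) = loeb_stage A x j"
    by (simp add: x_def j_def)
  have succ: "root (loeb_tree A (Suc n)) =
      (if j = 5 then loeb_stage A y 0 else loeb_stage A x (Suc j))"
    by (simp add: x_def y_def j_def Suc_div_mod_6)
  have "j < 6" by (simp add: j_def)
  then consider "j = 0" | "j = 1" | "j = 2" | "j = 3" | "j = 4" | "j = 5" by linarith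
  then show ?thesis
  proof cases
    case 1
    then show ?thesis
      using rule_inst.boxR[of y "{}" "{#(x, D)#}" x A "{#}"]
      by (simp only: root succ kids) (simp add: loeb_stage_def Let_def labels_def y_def D_def)
  next
    case 2
    then show ?thesis
      using rule_inst.contrL[of "{(x, y)}" x D "{#}" "{#(y, A)#}"]
      by (simp only: root succ kids) (simp add: loeb_stage_def Let_def y_def D_def)
  next
    case 3
    then show ?thesis
      using rule_inst.boxL[of x y "{(x, y)}" "Imp (Box A) A" "{#(x, D)#}" "{#(y, A)#}"]
      by (simp only: root succ kids) (simp add: loeb_stage_def Let_def y_def D_def)
  next
    case 4
    then show ?thesis
      using rule_inst.impL[of "{(x, y)}" y "Box A" A "{#(x, D)#}" "{#}" "{#}" "{#(y, A)#}"]
      by (simp only: root succ kids) (simp add: loeb_stage_def Let_def I_def y_def D_def)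
  next
    case 5
    then show ?thesis
      using rule_inst.cut[of "{(x, y)}" "{#(x, D)#}" "{#}" "{#}" "{#(y, Box A)#}" y D]
      by (simp only: root succ kids) (simp add: loeb_stage_def Let_def L_def y_def D_def)
  next
    case 6
    then show ?thesis
      using rule_inst.thin[of "{}" "{(x, y)}" "{#(y, D)#}" "{#(y, Box A)#}"]
      by (simp only: root succ kids) (simp add: loeb_stage_def Let_def y_def D_def)
  qed
qed

lemma preproof_loeb_tree: "preproof (loeb_tree A n)"
proof (coinduction arbitrary: n rule: preproof.coinduct)
  case preproof
  then show ?case
    using loeb_tree_rule_inst loeb_tree_kids unfolding inf_proof_def by blast
qed

lemma loeb_tree_branch_progressing:
  assumes b: "infinite_branch (loeb_tree A n) b"
  shows "\<exists>k xs. progressing_trace (\<lambda>i. root (b i)) k xs"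
proof (cases "\<exists>i. inf_proof (b i)")
  case True
  then show ?thesis using b progressing_trace_if_enters_inf_proof by blast
next
  case False
  have b_eq: "b i = loeb_tree A (n + i)" for i
  proof (induction i)
    case 0
    then show ?case using b by (simp add: infinite_branch_def)
  next
    case (Suc i)
    have "b (Suc i) \<in> set (kids (b i))"
      using b unfolding infinite_branch_def by blast
    then show ?case
      using Suc.IH loeb_tree_kids False by (metis add_Suc_right)
  qed
  \<comment> \<open>The thinning at stage 5 still has x R y in its context, so the label may advance there.\<close>
  define xs where "xs i = (n + i) div 6" for i
  have progress: "progress_point (\<lambda>i. root (b i)) xs i" if "(n + i) mod 6 = 5" for i
    using that by (simp add: progress_point_def rel_ctx_def b_eq xs_def loeb_stage_def Suc_div_mod_6)
  have "is_trace (\<lambda>i. root (b i)) 0 xs"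
    unfolding is_trace_def
  proof (intro allI impI)
    fix i :: nat
    show "xs i = xs (Suc i) \<or> (xs i, xs (Suc i)) \<in> rel_ctx (root (b i))"
      using progress[of i] Suc_div_mod_6(1)[of "n + i"]
      by (cases "(n + i) mod 6 = 5") (auto simp: xs_def progress_point_def)
  qed
  moreover have "infinite {i. 0 \<le> i \<and> progress_point (\<lambda>i. root (b i)) xs i}"
    unfolding infinite_nat_iff_unbounded_le
  proof
    fix m
    have "\<exists>i\<ge>m. (n + i) mod 6 = 5" by presburger
    then show "\<exists>i\<ge>m. i \<in> {i. 0 \<le> i \<and> progress_point (\<lambda>i. root (b i)) xs i}"
      using progress by blast
  qed
  ultimately show ?thesis unfolding progressing_trace_def by blast
qed

lemma has_inf_proof_axGL: "has_inf_proof (R, {#}, {#(x, Imp (Box (Imp (Box A) A)) (Box A))#})"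
proof -
  have "inf_proof (loeb_tree A (6 * x))"
    unfolding inf_proof_def using preproof_loeb_tree loeb_tree_branch_progressing by blast
  moreover have "root (loeb_tree A (6 * x)) = ({}, {#(x, Box (Imp (Box A) A))#}, {#(x, Box A)#})"
    by (simp add: loeb_stage_def)
  ultimately have "has_inf_proof ({}, {#(x, Box (Imp (Box A) A))#}, add_mset (x, Box A) {#})"
    unfolding has_inf_proof_def by (intro exI[of _ "loeb_tree A (6 * x)"]) auto
  then have "has_inf_proof (R, add_mset (x, Box (Imp (Box A) A)) {#}, add_mset (x, Box A) {#})"
    by (rule has_inf_proof_thin) simp
  then show ?thesis by (rule has_inf_proof_rule1[OF rule_inst.impR])
qed

theorem mainTheorem13:
  fixes A :: "'a fm" and x :: label
  assumes "GL A"
  shows "has_inf_proof ({}, {#}, {#(x, A)#})"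
  using assms
proof (induction arbitrary: x rule: GL.induct)
  case (taut A)
  then show ?case by (rule has_inf_proof_tautology)
next
  case (axK A B)
  show ?case by (rule has_inf_proof_axK)
next
  case (ax4 A)
  show ?case by (rule has_inf_proof_ax4)
next
  case (axGL A)
  show ?case by (rule has_inf_proof_axGL)
next
  case (axDual A)
  show ?case by (rule has_inf_proof_axDual)
next
  case (mp A B)
  then show ?case using has_inf_proof_mp by blast
next
  case (nec A)
  then show ?case using has_inf_proof_nec by blast
qed

end
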